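(* Let $J\subset\mathbb Z$ be a finite interval with $|J|<p$, $J'\subseteq J$ a subinterval and $n\ge1$. Then $\tilde\xi_n^{J'\subset J}$ equals $\ell_n^{J'}$ up to a unit of $\mathbb Z_p[[x]]$.
   Context: Let $p$ be an odd prime and $u\in1+p\mathbb Z_p$, $u\neq1$. For $f\in\mathbb Q_p[[x]]$ and $j\in\mathbb Z$, $f^{(j)}(x)=f(u^{-j}(1+x)-1)$. Let $\omega_n=(1+x)^{p^n}-1$ ($n\ge0$), $\xi_n=\omega_n/\omega_{n-1}$ ($n\ge1$). For a finite set $S\subset\mathbb Z$ of cardinality $|S|$, $\ell_n^{S}=\prod_{j\in S}\xi_n^{(j)}/p$ (empty product $1$). For a finite interval $J$, a subinterval $J'\subseteq J$ and $n\ge1$, $\tilde\xi_n^{J'\subset J}$ denotes the unique polynomial of $\mathbb Q_p[x]$ of degree $<((p-1)|J'|+|J|)p^{n-1}$ with $\tilde\xi_n^{J'\subset J}\equiv\xi_n^{(j)}/p\pmod{\omega_n^{(j)}}$ for $j\in J'$ and $\tilde\xi_n^{J'\subset J}\equiv1\pmod{\omega_{n-1}^{(j)}}$ for $j\in J\setminus J'$. *)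

theory Defs
  imports "HOL-Computational_Algebra.Computational_Algebra"
begin

text \<open>The field Q_p is modelled abstractly as a field of characteristic 0 together with an
absolute value that extends the p-adic absolute value on the integers, in which Q is dense
and which is complete: i.e. a completion of Q with respect to the p-adic absolute value.
Any such field is (isometrically) isomorphic to Q_p.\<close>

definition is_Qp :: "nat \<Rightarrow> ('a::field_char_0 \<Rightarrow> real) \<Rightarrow> bool" where
  "is_Qp p av \<longleftrightarrow>
     (\<forall>x. av x \<ge> 0) \<and> (\<forall>x. av x = 0 \<longleftrightarrow> x = 0) \<and>
     (\<forall>x y. av (x * y) = av x * av y) \<and>
     (\<forall>x y. av (x + y) \<le> max (av x) (av y)) \<and>
     (\<forall>k::int. k \<noteq> 0 \<longrightarrow> av (of_int k) = inverse (real p ^ multiplicity (int p) k)) \<and>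
     (\<forall>x e. e > 0 \<longrightarrow> (\<exists>q::rat. av (x - of_rat q) < e)) \<and>
     (\<forall>X::nat \<Rightarrow> 'a. (\<forall>e>0. \<exists>N. \<forall>m\<ge>N. \<forall>n\<ge>N. av (X m - X n) < e) \<longrightarrow>
        (\<exists>L. \<forall>e>0. \<exists>N. \<forall>n\<ge>N. av (X n - L) < e))"

text \<open>Z_p = closed unit ball; Z_p[[x]] = power series with all coefficients in Z_p.\<close>
definition Zp_fps :: "('a::field_char_0 \<Rightarrow> real) \<Rightarrow> 'a fps \<Rightarrow> bool" where
  "Zp_fps av f \<longleftrightarrow> (\<forall>i. av (fps_nth f i) \<le> 1)"

definition omega :: "nat \<Rightarrow> nat \<Rightarrow> 'a::field_char_0 poly" where
  "omega p n = [:1, 1:] ^ (p ^ n) - 1"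

definition xi :: "nat \<Rightarrow> nat \<Rightarrow> 'a::field_char_0 poly" where
  "xi p n = omega p n div omega p (n - 1)"

definition twist :: "'a::field_char_0 \<Rightarrow> int \<Rightarrow> 'a poly \<Rightarrow> 'a poly" where
  "twist u j f = pcompose f [: u powi (- j) - 1, u powi (- j) :]"

definition ell :: "nat \<Rightarrow> 'a::field_char_0 \<Rightarrow> nat \<Rightarrow> int set \<Rightarrow> 'a poly" where
  "ell p u n S = (\<Prod>j\<in>S. smult (inverse (of_nat p)) (twist u j (xi p n)))"

text \<open>tilde xi_n^{J' subset J}: the unique polynomial of degree
  < ((p-1)|J'| + |J|) p^(n-1) (the zero polynomial having degree -infinity) with the
  prescribed congruences.\<close>
definition xi_tilde :: "nat \<Rightarrow> 'a::field_char_0 \<Rightarrow> nat \<Rightarrow> int set \<Rightarrow> int set \<Rightarrow> 'a poly" where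
  "xi_tilde p u n J' J = (THE q.
     (q = 0 \<or> degree q < ((p - 1) * card J' + card J) * p ^ (n - 1)) \<and>
     (\<forall>j\<in>J'. q mod twist u j (omega p n)
               = smult (inverse (of_nat p)) (twist u j (xi p n)) mod twist u j (omega p n)) \<and>
     (\<forall>j\<in>J - J'. q mod twist u j (omega p (n - 1)) = 1 mod twist u j (omega p (n - 1))))"

end

theory Submission
  imports Defs
begin

text \<open>Write \<open>Y = \<omega>\<^sub>n\<^sub>-\<^sub>1\<close>. Then \<open>\<omega>\<^sub>n = Y \<Phi>(Y)\<close> and \<open>\<xi>\<^sub>n = \<Phi>(Y)\<close> with \<open>\<Phi>(y) = ((1 + y)^p - 1)/y\<close>,
  and the twist by \<open>j\<close> acts on \<open>Y\<close> as \<open>Y \<mapsto> \<gamma>\<^sub>j(1 + Y) - 1\<close>, \<open>\<gamma>\<^sub>j = u^(-j p^(n-1))\<close>. So every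
  polynomial in sight is a polynomial in \<open>Y\<close>, and it suffices to work in one variable \<open>y\<close>.
  Put \<open>\<phi>\<^sub>j = \<Phi>(\<gamma>\<^sub>j(1 + y) - 1)/p\<close> and \<open>F = \<Prod>\<^sub>j\<^sub>\<in>\<^sub>J\<^sub>' \<phi>\<^sub>j\<close>, so that \<open>\<ell> = F(Y)\<close>.
  The roots \<open>r\<^sub>j = \<gamma>\<^sub>j\<^sup>-\<^sup>1 - 1\<close> are p-adically small, hence \<open>W = \<Prod>\<^sub>j\<^sub>\<in>\<^sub>J (y - r\<^sub>j)\<close> is a distinguished
  polynomial of degree \<open>|J| < p\<close>, and modulo \<open>W\<close> each \<open>\<phi>\<^sub>j\<close> is congruent to an integral polynomial
  with unit constant term. Inverting \<open>F\<close> modulo \<open>W\<close> gives \<open>P\<close> of degree \<open>< |J|\<close>, which a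
  Weierstrass-division argument shows to be integral with unit constant term. Since \<open>\<phi>\<^sub>j \<equiv> 1\<close>
  modulo \<open>\<gamma>\<^sub>j(1 + y) - 1\<close>, the polynomial \<open>(F P)(Y)\<close> satisfies all congruences defining \<open>\<xi>\<^sup>~\<close>
  and the degree bound; the moduli are pairwise comaximal because \<open>u\<close> is not a root of unity,
  so \<open>\<xi>\<^sup>~ = \<ell> \<cdot> P(Y)\<close>, and \<open>P(Y)\<close> is a unit of \<open>\<int>\<^sub>p[[x]]\<close>.\<close>

section \<open>The p-adic absolute value\<close>

locale padic_field =
  fixes p :: nat and av :: "'a::field_char_0 \<Rightarrow> real"
  assumes prime_p: "prime p" and odd_p: "odd p" and is_Qp: "is_Qp p av"
begin

lemma av_nonneg: "av x \<ge> 0"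
  using is_Qp unfolding is_Qp_def by blast

lemma av_eq_0_iff [simp]: "av x = 0 \<longleftrightarrow> x = 0"
  using is_Qp unfolding is_Qp_def by blast

lemma av_0 [simp]: "av 0 = 0"
  by simp

lemma av_mult: "av (x * y) = av x * av y"
  using is_Qp unfolding is_Qp_def by blast

lemma av_add_le_max: "av (x + y) \<le> max (av x) (av y)"
  using is_Qp unfolding is_Qp_def by blast

lemma av_of_int: "k \<noteq> 0 \<Longrightarrow> av (of_int k) = inverse (real p ^ multiplicity (int p) k)"
  using is_Qp unfolding is_Qp_def by blast

lemma p_gt_1: "p > 1"
  using prime_p prime_gt_1_nat by blast

lemma p_ge_3: "p \<ge> 3"
  using p_gt_1 odd_p by (cases "p = 2") auto

lemma of_nat_p_neq_0 [simp]: "(of_nat p :: 'a) \<noteq> 0"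
  using p_gt_1 by simp

lemma of_nat_p_mult_inverse [simp]: "of_nat p * inverse (of_nat p :: 'a) = 1"
  using of_nat_p_neq_0 by (rule right_inverse)

lemma inverse_mult_of_nat_p [simp]: "inverse (of_nat p :: 'a) * of_nat p = 1"
  using of_nat_p_neq_0 by (rule left_inverse)

lemma inverse_p_pos: "inverse (real p) > 0"
  using p_gt_1 by simp

lemma inverse_p_less_1: "inverse (real p) < 1"
  using p_gt_1 by (simp add: inverse_less_1_iff)

lemma av_1 [simp]: "av 1 = 1"
  using av_mult[of 1 1] by (metis av_eq_0_iff mult_cancel_right1 one_neq_zero)

lemma av_minus [simp]: "av (- x) = av x"
proof -
  have "av (-1) * av (-1) = 1"
    using av_mult[of "-1" "-1"] by simp
  then have "av (-1) = 1"
    using av_nonneg[of "-1"] by (metis abs_of_nonneg abs_square_eq_1 power2_eq_square)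
  then show ?thesis
    using av_mult[of "-1" x] by simp
qed

lemma av_minus_commute: "av (x - y) = av (y - x)"
  by (metis av_minus minus_diff_eq)

lemma av_inverse: "av (inverse x) = inverse (av x)"
proof (cases "x = 0")
  case False
  then have "av x * av (inverse x) = 1"
    using av_mult[of x "inverse x"] by simp
  then show ?thesis
    by (metis inverse_unique)
qed simp

lemma av_divide: "av (x / y) = av x / av y"
  by (simp add: divide_inverse av_mult av_inverse)

lemma av_power: "av (x ^ k) = av x ^ k"
  by (induction k) (simp_all add: av_mult)

lemma av_prod: "av (prod f A) = (\<Prod>i\<in>A. av (f i))"
  by (induction A rule: infinite_finite_induct) (simp_all add: av_mult)

lemma av_add_le: "av x \<le> B \<Longrightarrow> av y \<le> B \<Longrightarrow> av (x + y) \<le> B"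
  using av_add_le_max[of x y] by linarith

lemma av_add_less: "av x < B \<Longrightarrow> av y < B \<Longrightarrow> av (x + y) < B"
  using av_add_le_max[of x y] by linarith

lemma av_diff_le: "av x \<le> B \<Longrightarrow> av y \<le> B \<Longrightarrow> av (x - y) \<le> B"
  using av_add_le[of x B "- y"] by simp

lemma av_diff_less: "av x < B \<Longrightarrow> av y < B \<Longrightarrow> av (x - y) < B"
  using av_add_less[of x B "- y"] by simp

lemma av_sum_le: "(\<And>i. i \<in> A \<Longrightarrow> av (f i) \<le> B) \<Longrightarrow> B \<ge> 0 \<Longrightarrow> av (sum f A) \<le> B"
  by (induction A rule: infinite_finite_induct) (simp_all add: av_add_le)

lemma av_sum_less: "(\<And>i. i \<in> A \<Longrightarrow> av (f i) < B) \<Longrightarrow> B > 0 \<Longrightarrow> av (sum f A) < B"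
  by (induction A rule: infinite_finite_induct) (simp_all add: av_add_less)

lemma av_mult_less_1: "av x \<le> 1 \<Longrightarrow> av y < 1 \<Longrightarrow> av (x * y) < 1"
proof -
  assume "av x \<le> 1" "av y < 1"
  then have "av x * av y \<le> av y"
    using av_nonneg[of y] by (simp add: mult_left_le_one_le av_nonneg)
  with \<open>av y < 1\<close> show ?thesis
    by (simp add: av_mult)
qed

lemma av_add_eq_dominant: "av y < av x \<Longrightarrow> av (x + y) = av x"
proof -
  assume less: "av y < av x"
  have "av (x + y) \<le> av x"
    using av_add_le_max[of x y] less by linarith
  moreover have "av x \<le> max (av (x + y)) (av (- y))"
    using av_add_le_max[of "x + y" "- y"] by simp
  ultimately show ?thesis
    using less by auto
qed

lemma av_eq_1_if_near_1: "av (x - 1) < 1 \<Longrightarrow> av x = 1"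
  using av_add_eq_dominant[of "x - 1" 1] by simp

lemma av_less_1_if_le_inverse_p: "av x \<le> inverse (real p) \<Longrightarrow> av x < 1"
  using inverse_p_less_1 by linarith

lemma av_of_nat_le_1: "av (of_nat k) \<le> 1"
proof (cases "k = 0")
  case False
  have "1 \<le> real p ^ multiplicity (int p) (int k)"
    using p_gt_1 by simp
  then show ?thesis
    using av_of_int[of "int k"] False by (simp add: inverse_le_1_iff)
qed simp

lemma av_of_nat_eq_1: "\<not> p dvd k \<Longrightarrow> av (of_nat k) = 1"
proof -
  assume not_dvd: "\<not> p dvd k"
  then have "k \<noteq> 0"
    by (metis dvd_0_right)
  moreover have "multiplicity (int p) (int k) = 0"
    using not_dvd by (intro not_dvd_imp_multiplicity_0) simp
  ultimately show ?thesis
    using av_of_int[of "int k"] by simp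
qed

lemma av_of_nat_le_inverse_p: "p dvd k \<Longrightarrow> av (of_nat k) \<le> inverse (real p)"
proof (cases "k = 0")
  case False
  assume "p dvd k"
  then have "1 \<le> multiplicity (int p) (int k)"
    using False prime_p by (intro multiplicity_geI) (auto simp: prime_gt_1_nat)
  then have "real p ^ 1 \<le> real p ^ multiplicity (int p) (int k)"
    using p_gt_1 by (intro power_increasing) auto
  then show ?thesis
    using av_of_int[of "int k"] False p_gt_1 by (auto intro: le_imp_inverse_le)
qed (simp add: p_gt_1)

lemma av_p: "av (of_nat p :: 'a) = inverse (real p)"
  using av_of_int[of "int p"] multiplicity_self[of "int p"] p_gt_1 by simp

lemma av_divide_p_le_1: "av x \<le> inverse (real p) \<Longrightarrow> av (x / of_nat p) \<le> 1"
  using p_gt_1 by (simp add: av_divide av_p field_simps)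

section \<open>Integral polynomials\<close>

definition integral_poly :: "'a poly \<Rightarrow> bool" where
  "integral_poly f \<longleftrightarrow> (\<forall>k. av (coeff f k) \<le> 1)"

lemma integral_polyI: "(\<And>k. av (coeff f k) \<le> 1) \<Longrightarrow> integral_poly f"
  by (simp add: integral_poly_def)

lemma integral_polyD: "integral_poly f \<Longrightarrow> av (coeff f k) \<le> 1"
  by (simp add: integral_poly_def)

lemma integral_poly_pCons_iff [simp]: "integral_poly (pCons c f) \<longleftrightarrow> av c \<le> 1 \<and> integral_poly f"
  by (auto simp: integral_poly_def coeff_pCons split: nat.split)

lemma integral_poly_0 [simp]: "integral_poly 0"
  by (simp add: integral_poly_def)

lemma integral_poly_1 [simp]: "integral_poly 1"
  by (simp add: one_pCons)

lemma integral_poly_add: "integral_poly f \<Longrightarrow> integral_poly g \<Longrightarrow> integral_poly (f + g)"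
  by (simp add: integral_poly_def av_add_le)

lemma integral_poly_diff: "integral_poly f \<Longrightarrow> integral_poly g \<Longrightarrow> integral_poly (f - g)"
  by (simp add: integral_poly_def av_diff_le)

lemma integral_poly_mult: "integral_poly f \<Longrightarrow> integral_poly g \<Longrightarrow> integral_poly (f * g)"
  unfolding integral_poly_def coeff_mult
  by (intro allI av_sum_le) (auto simp: av_mult intro: mult_le_one av_nonneg)

lemma integral_poly_smult: "av c \<le> 1 \<Longrightarrow> integral_poly f \<Longrightarrow> integral_poly (smult c f)"
  by (simp add: integral_poly_def av_mult mult_le_one av_nonneg)

lemma integral_poly_power: "integral_poly f \<Longrightarrow> integral_poly (f ^ k)"
  by (induction k) (simp_all add: integral_poly_mult)

lemma integral_poly_sum: "(\<And>i. i \<in> A \<Longrightarrow> integral_poly (f i)) \<Longrightarrow> integral_poly (sum f A)"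
  by (induction A rule: infinite_finite_induct) (simp_all add: integral_poly_add)

lemma integral_poly_prod: "(\<And>i. i \<in> A \<Longrightarrow> integral_poly (f i)) \<Longrightarrow> integral_poly (prod f A)"
  by (induction A rule: infinite_finite_induct) (simp_all add: integral_poly_mult)

lemma integral_poly_monom: "av c \<le> 1 \<Longrightarrow> integral_poly (monom c k)"
  by (simp add: integral_poly_def coeff_monom)

lemma integral_poly_pcompose:
  assumes "integral_poly f" "integral_poly g"
  shows "integral_poly (f \<circ>\<^sub>p g)"
proof -
  have "coeff (f \<circ>\<^sub>p g) k \<in> {x. av x \<le> 1}" for k
    by (rule coeff_pcompose_semiring_closed)
      (use assms in \<open>auto simp: integral_poly_def av_mult intro: av_add_le mult_le_one av_nonneg\<close>)
  then show ?thesis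
    by (simp add: integral_poly_def)
qed

lemma av_poly_le_1: "integral_poly f \<Longrightarrow> av x \<le> 1 \<Longrightarrow> av (poly f x) \<le> 1"
  by (induction f rule: pCons_induct) (auto simp: av_mult intro!: av_add_le mult_le_one av_nonneg)

lemma av_poly_minus_coeff_0_less_1:
  assumes "integral_poly f" "av x < 1"
  shows "av (poly f x - coeff f 0) < 1"
proof -
  obtain c g where fg: "f = pCons c g"
    by (rule pCons_cases)
  then have "av (poly g x) \<le> 1"
    using assms by (intro av_poly_le_1) auto
  then show ?thesis
    using fg assms(2) av_mult_less_1[of "poly g x" x] by (simp add: mult.commute)
qed

end

section \<open>The polynomial \<open>((1 + y)^p - 1) / y\<close>\<close>

lemma pcompose_power_left: "(f ^ n) \<circ>\<^sub>p g = (f \<circ>\<^sub>p g) ^ n"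
  for f g :: "'a::comm_ring_1 poly"
  by (induction n) (simp_all add: pcompose_mult pcompose_1)

lemma pcompose_idL [simp]: "[:0, 1:] \<circ>\<^sub>p g = g"
  for g :: "'a::comm_ring_1 poly"
  by (simp add: pcompose_pCons)

lemma X_power_eq_monom: "[:0, 1:] ^ n = (monom 1 n :: 'a::comm_ring_1 poly)"
  by (simp add: monom_altdef)

lemma coeff_X_plus_1_power: "coeff ([:1, 1:] ^ k :: 'a::comm_ring_1 poly) i = of_nat (k choose i)"
proof (cases "i \<le> k")
  case False
  then have "coeff ([:1, 1:] ^ k :: 'a poly) i = 0"
    by (intro coeff_eq_0) (simp add: degree_linear_power)
  with False show ?thesis
    by (simp add: binomial_eq_0)
qed (simp add: coeff_linear_poly_power)

context padic_field
begin

definition Phi :: "'a poly" where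
  "Phi = (\<Sum>k<p. [:1, 1:] ^ k)"

definition Psi :: "'a poly" where
  "Psi = smult (inverse (of_nat p)) (Phi - [:0, 1:] ^ (p - 1))"

lemma X_mult_Phi: "[:0, 1:] * Phi = [:1, 1:] ^ p - 1"
proof -
  have "[:1, 1:] ^ p - 1 = ([:1, 1:] - 1) * Phi"
    unfolding Phi_def by (rule power_diff_1_eq)
  then show ?thesis
    by (simp add: one_pCons)
qed

lemma poly_Phi: "poly Phi d = (\<Sum>k<p. (1 + d) ^ k)"
  by (simp add: Phi_def poly_sum poly_power)

lemma poly_Phi_0: "poly Phi 0 = of_nat p"
  by (simp add: poly_Phi)

lemma degree_Phi_le: "degree Phi \<le> p - 1"
  unfolding Phi_def
  by (rule degree_sum_le) (auto intro: order.trans[OF degree_power_le])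

lemma coeff_Phi: "coeff Phi i = of_nat (p choose Suc i)"
proof -
  have "coeff Phi i = of_nat (\<Sum>k\<le>p - 1. k choose i)"
    using p_gt_1 by (simp add: Phi_def coeff_sum coeff_X_plus_1_power lessThan_Suc_atMost[symmetric])
  also have "(\<Sum>k\<le>p - 1. k choose i) = p choose Suc i"
    using sum_choose_upper[of i "p - 1"] p_gt_1 by simp
  finally show ?thesis .
qed

lemma Phi_eq_Psi: "Phi = smult (of_nat p) Psi + [:0, 1:] ^ (p - 1)"
  by (simp add: Psi_def)

lemma coeff_Psi: "coeff Psi i = (of_nat (p choose Suc i) - (if i = p - 1 then 1 else 0)) / of_nat p"
  by (simp add: Psi_def coeff_Phi X_power_eq_monom coeff_monom divide_inverse mult.commute)

lemma coeff_Psi_0: "coeff Psi 0 = 1"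
  using p_gt_1 by (simp add: coeff_Psi)

text \<open>The binomial coefficients \<open>p choose k\<close>, \<open>0 < k < p\<close>, are divisible by \<open>p\<close>.\<close>
lemma integral_poly_Psi: "integral_poly Psi"
proof (rule integral_polyI)
  fix i
  consider "Suc i < p" | "i = p - 1" | "Suc i > p"
    using p_gt_1 by linarith
  then show "av (coeff Psi i) \<le> 1"
  proof cases
    case 1
    then have "p dvd (p choose Suc i)"
      using prime_p by (intro dvd_choose_prime) auto
    then show ?thesis
      using 1 av_of_nat_le_inverse_p av_divide_p_le_1 by (simp add: coeff_Psi)
  next
    case 2
    then show ?thesis
      using p_gt_1 by (simp add: coeff_Psi)
  next
    case 3
    then show ?thesis
      using p_gt_1 by (auto simp: coeff_Psi binomial_eq_0)
  qed
qed

lemma av_poly_Phi: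
  assumes "av d \<le> inverse (real p)"
  shows "av (poly Phi d) = inverse (real p)"
proof -
  have "av (poly Psi d - 1) < 1"
    using av_poly_minus_coeff_0_less_1[OF integral_poly_Psi, of d] assms
    by (simp add: coeff_Psi_0 av_less_1_if_le_inverse_p)
  then have "av (of_nat p * poly Psi d) = inverse (real p)"
    by (simp add: av_mult av_eq_1_if_near_1 av_p)
  moreover have "av (d ^ (p - 1)) < inverse (real p)"
  proof -
    have "av (d ^ (p - 1)) \<le> inverse (real p) ^ (p - 1)"
      unfolding av_power using assms av_nonneg by (rule power_mono)
    also have "\<dots> \<le> inverse (real p) ^ 2"
      using p_ge_3 inverse_p_less_1 inverse_p_pos by (intro power_decreasing) auto
    also have "\<dots> < inverse (real p)"
      using inverse_p_less_1 inverse_p_pos by (simp add: power2_eq_square)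
    finally show ?thesis .
  qed
  ultimately show ?thesis
    using av_add_eq_dominant[of "d ^ (p - 1)" "of_nat p * poly Psi d"]
    by (simp add: Phi_eq_Psi X_power_eq_monom poly_monom)
qed

section \<open>Principal units\<close>

definition principal_unit :: "'a \<Rightarrow> bool" where
  "principal_unit w \<longleftrightarrow> av (w - 1) \<le> inverse (real p)"

lemma av_principal_unit: "principal_unit w \<Longrightarrow> av w = 1"
  unfolding principal_unit_def by (intro av_eq_1_if_near_1 av_less_1_if_le_inverse_p)

lemma principal_unit_neq_0: "principal_unit w \<Longrightarrow> w \<noteq> 0"
  using av_principal_unit by force

lemma principal_unit_1 [simp]: "principal_unit 1"
  by (simp add: principal_unit_def less_imp_le inverse_p_pos)

lemma principal_unit_mult:
  assumes "principal_unit x" "principal_unit y"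
  shows "principal_unit (x * y)"
proof -
  have "x * y - 1 = x * (y - 1) + (x - 1)"
    by (simp add: algebra_simps)
  then show ?thesis
    using assms av_principal_unit[of x] unfolding principal_unit_def
    by (metis av_add_le av_mult mult_1)
qed

lemma principal_unit_inverse: "principal_unit x \<Longrightarrow> principal_unit (inverse x)"
proof -
  assume x: "principal_unit x"
  then have "inverse x - 1 = inverse x * (1 - x)"
    using principal_unit_neq_0 by (simp add: field_simps)
  then show ?thesis
    using x av_principal_unit[OF x] unfolding principal_unit_def
    by (simp add: av_mult av_inverse av_minus_commute)
qed

lemma principal_unit_power: "principal_unit x \<Longrightarrow> principal_unit (x ^ k)"
  by (induction k) (simp_all add: principal_unit_mult)

lemma principal_unit_powi: "principal_unit x \<Longrightarrow> principal_unit (x powi k)"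
  by (cases k rule: int_cases2)
    (simp_all add: power_int_minus power_int_of_nat principal_unit_power principal_unit_inverse)

text \<open>A principal unit \<open>y \<noteq> 1\<close> is not a root of unity: for \<open>m\<close> prime to \<open>p\<close> the sum
  \<open>1 + y + \<dots> + y^(m-1)\<close> is congruent to the unit \<open>m\<close>, and \<open>(y^p - 1)/(y - 1) = \<Phi>(y - 1)\<close>
  has absolute value \<open>1/p\<close>, so \<open>y^p\<close> is again a principal unit different from 1.\<close>
lemma principal_unit_power_neq_1:
  assumes "principal_unit y" "y \<noteq> 1" "m > 0"
  shows "y ^ m \<noteq> 1"
  using assms
proof (induction m arbitrary: y rule: less_induct)
  case (less m)
  show ?case
  proof (cases "p dvd m")
    case True
    then obtain m' where m': "m = p * m'" ..
    then have "0 < m'" "m' < m"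
      using less.prems p_gt_1 by auto
    have "av (poly Phi (y - 1)) = inverse (real p)"
      using less.prems by (intro av_poly_Phi) (simp add: principal_unit_def)
    then have "y ^ p - 1 \<noteq> 0"
      using less.prems inverse_p_pos power_diff_1_eq[of y p] by (auto simp: poly_Phi)
    then have "(y ^ p) ^ m' \<noteq> 1"
      using less.IH[OF \<open>m' < m\<close>] less.prems \<open>0 < m'\<close> by (simp add: principal_unit_power)
    then show ?thesis
      by (simp add: m' power_mult)
  next
    case False
    have "av (\<Sum>k<m. y ^ k - 1) < 1"
      using less.prems principal_unit_power
      by (intro av_sum_less) (auto simp: principal_unit_def intro: av_less_1_if_le_inverse_p)
    then have "av (of_nat m + (\<Sum>k<m. y ^ k - 1)) = 1"
      using av_add_eq_dominant av_of_nat_eq_1[OF False] by simp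
    then have "(\<Sum>k<m. y ^ k) \<noteq> 0"
      by (auto simp: sum_subtractf)
    then show ?thesis
      using less.prems power_diff_1_eq[of y m] by auto
  qed
qed

lemma principal_unit_powi_neq_1:
  assumes "principal_unit y" "y \<noteq> 1" "k \<noteq> 0"
  shows "y powi k \<noteq> 1"
  using assms principal_unit_power_neq_1[OF assms(1,2)] principal_unit_neq_0[OF assms(1)]
  by (cases k rule: int_cases2) (auto simp: power_int_minus power_int_of_nat)

lemma principal_unit_powi_power_inj:
  assumes u: "principal_unit u" "u \<noteq> 1" and "k > 0" and eq: "(u powi i) ^ k = (u powi j) ^ k"
  shows "i = j"
proof (rule ccontr)
  assume "i \<noteq> j"
  have "u \<noteq> 0"
    using principal_unit_neq_0[OF u(1)] .
  have power: "(u powi l) ^ k = u powi (l * int k)" for l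
    by (simp add: power_int_mult flip: power_int_of_nat)
  have "u powi ((i - j) * int k) = u powi (i * int k) * u powi (- (j * int k))"
    using \<open>u \<noteq> 0\<close> by (simp add: algebra_simps flip: power_int_add)
  also have "\<dots> = u powi (j * int k) * u powi (- (j * int k))"
    using eq by (simp only: power)
  also have "\<dots> = 1"
    using \<open>u \<noteq> 0\<close> by (simp flip: power_int_add)
  finally show False
    using principal_unit_powi_neq_1[OF u, of "(i - j) * int k"] \<open>i \<noteq> j\<close> \<open>k > 0\<close> by simp
qed
end

section \<open>Division by distinguished polynomials\<close>

lemma degree_minus_leading_term_less:
  fixes G W :: "'a::comm_ring_1 poly"
  assumes "lead_coeff W = 1" "degree W \<le> degree G" "degree W \<ge> 1"
  shows "degree (G - monom (lead_coeff G) (degree G - degree W) * W) < degree G"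
proof -
  define G' where "G' = G - monom (lead_coeff G) (degree G - degree W) * W"
  have "coeff G' k = 0" if "k \<ge> degree G" for k
  proof (cases "k = degree G")
    case True
    moreover have "degree G - (degree G - degree W) = degree W"
      using assms(2) by simp
    ultimately show ?thesis
      using assms(1) by (simp add: G'_def coeff_monom_mult)
  next
    case False
    then have "k > degree G"
      using that by simp
    then have "coeff G k = 0" "coeff W (k - (degree G - degree W)) = 0"
      using assms(2) by (simp_all add: coeff_eq_0)
    then show ?thesis
      by (simp add: G'_def coeff_monom_mult)
  qed
  then have "degree G' \<le> degree G - 1"
    using assms(2,3) by (intro degree_le) (auto simp: Suc_le_eq)
  moreover have "degree G - 1 < degree G"
    using assms(2,3) by simp
  ultimately show ?thesis
    unfolding G'_def by (rule le_less_trans)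
qed

context padic_field
begin

definition distinguished :: "'a poly \<Rightarrow> bool" where
  "distinguished W \<longleftrightarrow> lead_coeff W = 1 \<and> degree W \<ge> 1 \<and> integral_poly W \<and>
     (\<forall>k < degree W. av (coeff W k) < 1)"

lemma integral_division_monic:
  assumes W: "lead_coeff W = 1" "degree W \<ge> 1" "integral_poly W" and G: "integral_poly G"
  shows "\<exists>Q R. G = Q * W + R \<and> integral_poly Q \<and> integral_poly R \<and> degree R < degree W"
  using G
proof (induction "degree G" arbitrary: G rule: less_induct)
  case less
  show ?case
  proof (cases "degree G < degree W")
    case True
    then show ?thesis
      using less.prems by (intro exI[of _ 0] exI[of _ G]) simp
  next
    case False
    define c where "c = lead_coeff G"
    define G' where "G' = G - monom c (degree G - degree W) * W"
    have "degree G' < degree G"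
      using False W(1,2) unfolding G'_def c_def by (intro degree_minus_leading_term_less) auto
    moreover have "av c \<le> 1"
      using less.prems by (simp add: c_def integral_polyD)
    then have "integral_poly G'"
      unfolding G'_def using less.prems W(3)
      by (intro integral_poly_diff integral_poly_mult integral_poly_monom)
    ultimately obtain Q R where QR: "G' = Q * W + R" "integral_poly Q" "integral_poly R" "degree R < degree W"
      using less.hyps by blast
    have "G = (Q + monom c (degree G - degree W)) * W + R"
      using QR(1) unfolding G'_def by (simp add: algebra_simps)
    moreover have "integral_poly (Q + monom c (degree G - degree W))"
      using QR(2) \<open>av c \<le> 1\<close> by (intro integral_poly_add integral_poly_monom)
    ultimately show ?thesis
      using QR by blast
  qed
qed

lemma integral_quotient_monic:
  assumes W: "lead_coeff W = 1" "degree W \<ge> 1" "integral_poly W"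
    and G: "integral_poly G" "W dvd G - [:e:]"
  shows "\<exists>Q. integral_poly Q \<and> G = Q * W + [:e:]"
proof -
  obtain Q R where QR: "G = Q * W + R" "integral_poly Q" "degree R < degree W"
    using integral_division_monic[OF W G(1)] by blast
  have "R - [:e:] = (G - [:e:]) - Q * W"
    using QR(1) by simp
  then have "W dvd R - [:e:]"
    using G(2) by (metis dvd_diff dvd_triv_right)
  moreover have "degree (R - [:e:]) < degree W"
    using QR(3) W(2) by (intro degree_diff_less) auto
  ultimately have "R - [:e:] = 0"
    using dvd_imp_degree_le not_le by blast
  then show ?thesis
    using QR by auto
qed

text \<open>Compare coefficients in \<open>H P = Q W + e\<close> from the bottom up: all lower coefficients of \<open>W\<close>
  are small and \<open>H\<close> has a unit constant term.\<close>
lemma coeff_small_if_dvd_minus_small_const: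
  assumes W: "distinguished W"
    and H: "integral_poly H" "av (coeff H 0) = 1"
    and P: "integral_poly P" "W dvd H * P - [:e:]" "av e < 1"
  shows "k < degree W \<Longrightarrow> av (coeff P k) < 1"
proof (induction k rule: less_induct)
  case (less k)
  obtain Q where Q: "integral_poly Q" "H * P = Q * W + [:e:]"
    using W integral_quotient_monic[of W "H * P" e] integral_poly_mult[OF H(1) P(1)] P(2)
    by (auto simp: distinguished_def)
  have "av (coeff (Q * W) k) < 1"
    unfolding coeff_mult using W less.prems integral_polyD[OF Q(1)]
    by (intro av_sum_less) (auto simp: distinguished_def intro!: av_mult_less_1)
  then have "av (coeff (H * P) k) < 1"
    using Q(2) P(3) by (cases k) (simp_all add: av_add_less)
  moreover have "av (\<Sum>i\<in>{..k} - {0}. coeff H i * coeff P (k - i)) < 1"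
    using less integral_polyD[OF H(1)] by (intro av_sum_less) (auto intro!: av_mult_less_1)
  moreover have "coeff H 0 * coeff P k = coeff (H * P) k - (\<Sum>i\<in>{..k} - {0}. coeff H i * coeff P (k - i))"
    unfolding coeff_mult by (subst sum.remove[of _ 0]) auto
  ultimately have "av (coeff H 0 * coeff P k) < 1"
    by (simp add: av_diff_less)
  then show ?case
    using H(2) by (simp add: av_mult)
qed

lemma exists_max_coeff:
  assumes "degree P < N" "N \<ge> 1"
  obtains k0 where "k0 < N" "\<And>k. av (coeff P k) \<le> av (coeff P k0)"
proof -
  define M where "M = Max ((\<lambda>k. av (coeff P k)) ` {..<N})"
  have "M \<in> (\<lambda>k. av (coeff P k)) ` {..<N}"
    unfolding M_def using assms(2) by (intro Max_in) (auto simp: lessThan_empty_iff)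
  then obtain k0 where k0: "k0 < N" "av (coeff P k0) = M"
    by auto
  have max: "av (coeff P k) \<le> M" for k
  proof (cases "k < N")
    case True
    then show ?thesis
      unfolding M_def by (intro Max_ge) auto
  next
    case False
    then have "coeff P k = 0"
      using assms(1) by (intro coeff_eq_0) simp
    then show ?thesis
      using k0(2) av_nonneg by (metis av_0)
  qed
  show ?thesis
    using k0(1) by (rule that) (use max k0(2) in simp)
qed

text \<open>If \<open>P\<close> were not integral, scaling by its largest coefficient \<open>c\<close> would give an integral
  \<open>P/c\<close> with \<open>W dvd H P/c - 1/c\<close> and a coefficient equal to 1, contradicting the previous lemma.\<close>
lemma integral_if_dvd_mult_minus_1:
  assumes W: "distinguished W"
    and H: "integral_poly H" "av (coeff H 0) = 1"
    and P: "degree P < degree W" "W dvd H * P - 1"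
  shows "integral_poly P"
proof (rule ccontr)
  assume "\<not> integral_poly P"
  obtain k0 where k0: "k0 < degree W" and max: "\<And>k. av (coeff P k) \<le> av (coeff P k0)"
    using exists_max_coeff[OF P(1)] W by (auto simp: distinguished_def)
  define c where "c = coeff P k0"
  obtain k where "av (coeff P k) > 1"
    using \<open>\<not> integral_poly P\<close> by (meson integral_polyI not_le)
  then have "av c > 1"
    using max[of k] unfolding c_def by linarith
  then have "c \<noteq> 0"
    by auto
  define P' where "P' = smult (inverse c) P"
  have "integral_poly P'"
  proof (rule integral_polyI)
    fix k
    have "coeff P' k = coeff P k / c"
      by (simp add: P'_def divide_inverse mult.commute)
    then show "av (coeff P' k) \<le> 1"
      using \<open>av c > 1\<close> max[of k] by (simp add: av_divide divide_le_eq_1 c_def)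
  qed
  moreover have "H * P' - [:inverse c:] = smult (inverse c) (H * P - 1)"
    unfolding P'_def by (simp add: algebra_simps smult_diff_right one_pCons)
  then have "W dvd H * P' - [:inverse c:]"
    using P(2) by (simp add: dvd_smult)
  moreover have "av (inverse c) < 1"
    using \<open>av c > 1\<close> by (simp add: av_inverse inverse_less_1_iff)
  ultimately have "av (coeff P' k0) < 1"
    using coeff_small_if_dvd_minus_small_const[OF W H] k0 by blast
  moreover have "coeff P' k0 = 1"
    using \<open>c \<noteq> 0\<close> by (simp add: P'_def c_def)
  ultimately show False
    by simp
qed

lemma integral_inverse_mod_distinguished:
  assumes W: "distinguished W"
    and H: "integral_poly H" "av (coeff H 0) = 1"
    and P: "degree P < degree W" "W dvd H * P - 1"
  shows "integral_poly P \<and> av (coeff P 0) = 1"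
proof -
  have W1: "degree W \<ge> 1" "lead_coeff W = 1" "integral_poly W"
    using W by (simp_all add: distinguished_def)
  have integral: "integral_poly P"
    using integral_if_dvd_mult_minus_1[OF W H P] .
  obtain Q where Q: "integral_poly Q" "H * P = Q * W + 1"
    using integral_quotient_monic[OF W1(2,1,3) integral_poly_mult[OF H(1) integral], of 1] P(2)
    by (auto simp: one_pCons)
  have "coeff H 0 * coeff P 0 = coeff Q 0 * coeff W 0 + 1"
    using arg_cong[OF Q(2), of "\<lambda>f. coeff f 0"] by (simp add: coeff_mult)
  moreover have "av (coeff Q 0 * coeff W 0) < 1"
    using W W1(1) integral_polyD[OF Q(1)] by (intro av_mult_less_1) (auto simp: distinguished_def)
  ultimately have "av (coeff H 0 * coeff P 0) = 1"
    using av_add_eq_dominant[of "coeff Q 0 * coeff W 0" 1] by (simp add: add.commute)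
  then show ?thesis
    using integral H(2) by (simp add: av_mult)
qed

end

section \<open>Comaximal elements and the Chinese remainder theorem\<close>

definition comaximal :: "'a::comm_ring_1 \<Rightarrow> 'a \<Rightarrow> bool" where
  "comaximal a b \<longleftrightarrow> (\<exists>s t. s * a + t * b = 1)"

lemma comaximal_mult_dvd:
  assumes "comaximal a b" "a dvd g" "b dvd g"
  shows "a * b dvd g"
proof -
  obtain s t where st: "s * a + t * b = 1"
    using assms(1) unfolding comaximal_def by blast
  have "g = (s * a + t * b) * g"
    using st by simp
  also have "\<dots> = s * (a * g) + t * (b * g)"
    by (simp add: algebra_simps)
  finally have g_eq: "g = s * (a * g) + t * (b * g)" .
  have "a * b dvd a * g"
    using assms(3) by (rule mult_dvd_mono[OF dvd_refl])
  moreover have "a * b dvd b * g"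
    using assms(2) by (subst mult.commute) (rule mult_dvd_mono[OF dvd_refl])
  ultimately have "a * b dvd s * (a * g) + t * (b * g)"
    by (blast intro: dvd_add dvd_mult)
  then show ?thesis
    by (subst g_eq)
qed

lemma comaximal_mult_right:
  assumes "comaximal a b" "comaximal a c"
  shows "comaximal a (b * c)"
proof -
  obtain s1 t1 s2 t2 where "s1 * a + t1 * b = 1" "s2 * a + t2 * c = 1"
    using assms unfolding comaximal_def by blast
  then have "(s1 * a + t1 * b) * (s2 * a + t2 * c) = 1"
    by simp
  then have "(s1 * s2 * a + s1 * t2 * c + t1 * b * s2) * a + (t1 * t2) * (b * c) = 1"
    by (simp add: algebra_simps)
  then show ?thesis
    unfolding comaximal_def by blast
qed

lemma comaximal_one_right [simp]: "comaximal a 1"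
  unfolding comaximal_def by (rule exI[of _ 0], rule exI[of _ 1]) simp

lemma comaximal_prod_right: "(\<And>i. i \<in> A \<Longrightarrow> comaximal a (f i)) \<Longrightarrow> comaximal a (prod f A)"
  by (induction A rule: infinite_finite_induct) (simp_all add: comaximal_mult_right)

lemma comaximal_dvd:
  assumes "a dvd a'" "b dvd b'" "comaximal a' b'"
  shows "comaximal a b"
proof -
  obtain k l where "a' = a * k" "b' = b * l"
    using assms(1,2) by (auto elim!: dvdE)
  moreover obtain s t where "s * a' + t * b' = 1"
    using assms(3) unfolding comaximal_def by blast
  ultimately have "(s * k) * a + (t * l) * b = 1"
    by (simp add: algebra_simps)
  then show ?thesis
    unfolding comaximal_def by blast
qed

lemma comaximal_linear:
  fixes H :: "'a::field poly"
  assumes "poly H r \<noteq> 0"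
  shows "comaximal H [:- r, 1:]"
proof -
  define c where "c = poly H r"
  define q where "q = synthetic_div H r"
  have "H - [:- r, 1:] * q = [:c:]"
    using synthetic_div_correct'[of r H] unfolding c_def q_def by (simp add: algebra_simps)
  have "[:inverse c:] * H + [:- inverse c:] * q * [:- r, 1:] = [:inverse c:] * (H - [:- r, 1:] * q)"
    by (simp add: algebra_simps)
  also have "\<dots> = [:inverse c:] * [:c:]"
    by (simp only: \<open>H - [:- r, 1:] * q = [:c:]\<close>)
  also have "\<dots> = 1"
    using assms by (simp add: c_def one_pCons)
  finally show ?thesis
    unfolding comaximal_def by blast
qed

lemma comaximal_smult_minus_1:
  fixes f :: "'a::field poly"
  assumes "e1 \<noteq> e2"
  shows "comaximal (smult e1 f - 1) (smult e2 f - 1)"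
proof -
  define A where "A = smult e1 f - 1"
  define B where "B = smult e2 f - 1"
  define c where "c = e1 - e2"
  have "smult e2 A - smult e1 B = [:c:]"
    by (simp add: A_def B_def c_def smult_diff_right algebra_simps one_pCons)
  moreover have "[:e2 / c:] * A + [:- e1 / c:] * B = smult (inverse c) (smult e2 A - smult e1 B)"
    by (simp add: smult_diff_right divide_inverse mult.commute)
  ultimately have "[:e2 / c:] * A + [:- e1 / c:] * B = smult (inverse c) [:c:]"
    by simp
  also have "\<dots> = 1"
    using assms by (simp add: c_def one_pCons)
  finally show ?thesis
    unfolding comaximal_def A_def B_def by blast
qed

lemma prod_dvd_if_pairwise_comaximal:
  assumes "finite A" "\<And>i. i \<in> A \<Longrightarrow> M i dvd g"
    "\<And>i j. i \<in> A \<Longrightarrow> j \<in> A \<Longrightarrow> i \<noteq> j \<Longrightarrow> comaximal (M i) (M j)"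
  shows "prod M A dvd g"
  using assms
proof (induction A rule: finite_induct)
  case (insert i A)
  have "comaximal (M i) (prod M A)"
    using insert by (intro comaximal_prod_right) auto
  then show ?case
    using insert by (simp add: comaximal_mult_dvd)
qed simp

lemma eq_if_congruent_pairwise_comaximal:
  fixes q1 q2 :: "'a::field poly"
  assumes "finite A" "\<And>i. i \<in> A \<Longrightarrow> M i dvd q1 - q2"
    "\<And>i j. i \<in> A \<Longrightarrow> j \<in> A \<Longrightarrow> i \<noteq> j \<Longrightarrow> comaximal (M i) (M j)"
    "\<And>i. i \<in> A \<Longrightarrow> M i \<noteq> 0"
    "degree q1 < (\<Sum>i\<in>A. degree (M i))" "degree q2 < (\<Sum>i\<in>A. degree (M i))"
  shows "q1 = q2"
proof (rule ccontr)
  assume "q1 \<noteq> q2"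
  have "prod M A dvd q1 - q2"
    using assms(1-3) by (rule prod_dvd_if_pairwise_comaximal)
  then have "degree (prod M A) \<le> degree (q1 - q2)"
    using \<open>q1 \<noteq> q2\<close> by (intro dvd_imp_degree_le) auto
  moreover have "degree (prod M A) = (\<Sum>i\<in>A. degree (M i))"
    using assms(4) by (simp add: degree_prod_eq_sum_degree)
  moreover have "degree (q1 - q2) < (\<Sum>i\<in>A. degree (M i))"
    using assms(5,6) by (rule degree_diff_less)
  ultimately show False
    by simp
qed

lemma exists_inverse_mod_prod_linear:
  fixes H :: "'a::field poly"
  assumes "finite J" "J \<noteq> {}" "\<And>j. j \<in> J \<Longrightarrow> poly H (r j) \<noteq> 0"
  shows "\<exists>P. degree P < card J \<and> (\<Prod>j\<in>J. [:- r j, 1:]) dvd H * P - 1"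
proof -
  define W where "W = (\<Prod>j\<in>J. [:- r j, 1:])"
  have "W \<noteq> 0"
    using assms(1) by (simp add: W_def)
  have "comaximal H W"
    unfolding W_def using assms(3) by (intro comaximal_prod_right comaximal_linear)
  then obtain s t where st: "s * H + t * W = 1"
    unfolding comaximal_def by blast
  define P where "P = s mod W"
  have P_eq: "P = s - s div W * W"
    by (simp add: P_def minus_div_mult_eq_mod)
  have "H * P - 1 = (s * H + t * W - 1) + W * (- t - H * (s div W))"
    unfolding P_eq by (simp add: algebra_simps)
  then have "H * P - 1 = W * (- t - H * (s div W))"
    using st by simp
  moreover have "degree P < card J"
    using degree_mod_less[OF \<open>W \<noteq> 0\<close>, of s] assms(1,2)
    by (cases "P = 0") (auto simp: P_def W_def degree_prod_eq_sum_degree card_gt_0_iff)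
  ultimately show ?thesis
    unfolding W_def[symmetric] by (metis dvd_triv_left)
qed

lemma dvd_prod_diff_prod:
  fixes W :: "'a::comm_ring_1"
  shows "(\<And>j. j \<in> S \<Longrightarrow> W dvd f j - g j) \<Longrightarrow> W dvd prod f S - prod g S"
proof (induction S rule: infinite_finite_induct)
  case (insert j S)
  have "prod f (insert j S) - prod g (insert j S) = f j * (prod f S - prod g S) + (f j - g j) * prod g S"
    using insert(1,2) by (simp add: algebra_simps)
  then show ?case
    using insert by (metis dvd_add dvd_mult dvd_mult2 insertCI)
qed simp_all

section \<open>The problem in the variable \<open>y = \<omega>\<^sub>n\<^sub>-\<^sub>1\<close>\<close>

definition dilation :: "'a::comm_ring_1 \<Rightarrow> 'a poly" where
  "dilation \<gamma> = [:\<gamma> - 1, \<gamma>:]"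

lemma dilation_eq_smult_linear:
  fixes \<gamma> :: "'a::field"
  assumes "\<gamma> \<noteq> 0"
  shows "dilation \<gamma> = smult \<gamma> [:- (inverse \<gamma> - 1), 1:]"
  using assms by (simp add: dilation_def field_simps)

lemma dvd_dilation_iff:
  fixes \<gamma> :: "'a::field"
  assumes "\<gamma> \<noteq> 0"
  shows "dilation \<gamma> dvd f \<longleftrightarrow> [:- (inverse \<gamma> - 1), 1:] dvd f"
  unfolding dilation_eq_smult_linear[OF assms] smult_dvd_iff using assms by simp

context padic_field
begin

definition phi :: "'a \<Rightarrow> 'a poly" where
  "phi \<gamma> = smult (inverse (of_nat p)) (Phi \<circ>\<^sub>p dilation \<gamma>)"

lemma degree_phi_le: "degree (phi \<gamma>) \<le> p - 1"
proof -
  have "degree (phi \<gamma>) \<le> degree Phi * degree (dilation \<gamma>)"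
    unfolding phi_def by (metis degree_pcompose_le degree_smult_le le_trans)
  also have "\<dots> \<le> (p - 1) * 1"
    using degree_Phi_le by (intro mult_mono) (auto simp: dilation_def)
  finally show ?thesis
    by simp
qed

lemma dilation_dvd_phi_minus_1:
  assumes "\<gamma> \<noteq> 0"
  shows "dilation \<gamma> dvd phi \<gamma> - 1"
proof -
  have "poly (dilation \<gamma>) (inverse \<gamma> - 1) = 0"
    using assms by (simp add: dilation_def field_simps)
  then have "poly (phi \<gamma> - 1) (inverse \<gamma> - 1) = 0"
    by (simp add: phi_def poly_pcompose poly_Phi_0)
  then show ?thesis
    by (simp only: dvd_dilation_iff[OF assms] poly_eq_0_iff_dvd)
qed

lemma prod_linear_small_roots:
  assumes "finite J" "\<And>j. j \<in> J \<Longrightarrow> av (r j) \<le> inverse (real p)"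
  shows "\<exists>L. (\<Prod>j\<in>J. [:- r j, 1:]) = monom 1 (card J) + smult (of_nat p) L \<and> integral_poly L
            \<and> (\<forall>k\<ge>card J. coeff L k = 0)"
  using assms
proof (induction J rule: finite_induct)
  case empty
  show ?case
    by (rule exI[of _ 0]) (simp add: one_pCons monom_0)
next
  case (insert j A)
  then obtain L where L: "(\<Prod>j\<in>A. [:- r j, 1:]) = monom 1 (card A) + smult (of_nat p) L"
    "integral_poly L" "\<forall>k\<ge>card A. coeff L k = 0"
    by auto
  define L' where "L' = smult (- r j / of_nat p) (monom 1 (card A)) + pCons 0 L - smult (r j) L"
  have "(\<Prod>j\<in>insert j A. [:- r j, 1:]) = [:- r j, 1:] * (monom 1 (card A) + smult (of_nat p) L)"
    using insert L by simp
  also have "\<dots> = monom 1 (card (insert j A)) + smult (of_nat p) L'"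
    unfolding L'_def using insert(1,2) p_gt_1
    by (intro poly_eqI) (auto simp: coeff_pCons coeff_monom field_simps mult_pCons_left split: nat.split)
  finally have "(\<Prod>j\<in>insert j A. [:- r j, 1:]) = monom 1 (card (insert j A)) + smult (of_nat p) L'" .
  moreover have "av (r j) \<le> inverse (real p)"
    using insert by simp
  then have "integral_poly L'"
    unfolding L'_def using L(2) av_less_1_if_le_inverse_p[of "r j"]
    by (intro integral_poly_add integral_poly_diff integral_poly_smult integral_poly_monom)
      (auto simp: av_divide_p_le_1)
  moreover have "\<forall>k\<ge>card (insert j A). coeff L' k = 0"
    unfolding L'_def using insert(1,2) L(3) by (auto simp: coeff_pCons coeff_monom split: nat.split)
  ultimately show ?case
    by blast
qed

lemma distinguished_monom_plus_p:
  assumes "W = monom 1 N + smult (of_nat p) L" "integral_poly L" "\<forall>k\<ge>N. coeff L k = 0" "N \<ge> 1"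
  shows "distinguished W" "degree W = N"
proof -
  have coeff_W: "coeff W k = (if k = N then 1 else 0) + of_nat p * coeff L k" for k
    using assms(1) by (simp add: coeff_monom)
  have "coeff W N = 1"
    using coeff_W assms(3) by simp
  moreover have "degree W \<le> N"
    using coeff_W assms(3) by (intro degree_le) auto
  ultimately show "degree W = N"
    by (metis le_antisym le_degree zero_neq_one)
  have "av (coeff W k) < 1" if "k < N" for k
  proof -
    have "av (coeff W k) = inverse (real p) * av (coeff L k)"
      using that coeff_W av_p by (simp add: av_mult)
    also have "\<dots> \<le> inverse (real p)"
      using integral_polyD[OF assms(2)] inverse_p_pos by (intro mult_left_le) auto
    finally show ?thesis
      using inverse_p_less_1 by simp
  qed
  moreover have "integral_poly W"
    unfolding assms(1) using assms(2) av_of_nat_le_1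
    by (intro integral_poly_add integral_poly_monom integral_poly_smult) auto
  ultimately show "distinguished W"
    using \<open>degree W = N\<close> \<open>coeff W N = 1\<close> assms(4) by (simp add: distinguished_def)
qed

lemma dilation_power_expansion:
  assumes \<gamma>: "principal_unit \<gamma>" and "m \<ge> 1"
  obtains R where "dilation \<gamma> ^ m = smult (\<gamma> ^ m) ([:0, 1:] ^ m) + smult (\<gamma> - 1) R"
    "integral_poly R" "poly R 0 = (\<gamma> - 1) ^ (m - 1)"
proof
  define y where "y = [:0, \<gamma>:]"
  define R where "R = (\<Sum>i<m. y ^ (m - Suc i) * dilation \<gamma> ^ i)"
  have "dilation \<gamma> ^ m - y ^ m = [:\<gamma> - 1:] * R"
    using power_diff_sumr2[of "dilation \<gamma>" m y] by (simp add: R_def y_def dilation_def)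
  moreover have "y ^ m = smult (\<gamma> ^ m) ([:0, 1:] ^ m)"
    by (simp add: y_def flip: smult_power)
  ultimately show "dilation \<gamma> ^ m = smult (\<gamma> ^ m) ([:0, 1:] ^ m) + smult (\<gamma> - 1) R"
    by (simp add: algebra_simps)
  have "av \<gamma> = 1" "av (\<gamma> - 1) < 1"
    using \<gamma> av_principal_unit av_less_1_if_le_inverse_p by (auto simp: principal_unit_def)
  then show "integral_poly R"
    unfolding R_def y_def dilation_def
    by (intro integral_poly_sum integral_poly_mult integral_poly_power) simp_all
  have "poly R 0 = (\<Sum>i<m. (if i = m - 1 then (\<gamma> - 1) ^ i else 0))"
    unfolding R_def poly_sum using \<open>m \<ge> 1\<close>
    by (intro sum.cong) (auto simp: y_def dilation_def poly_power)
  then show "poly R 0 = (\<gamma> - 1) ^ (m - 1)"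
    using \<open>m \<ge> 1\<close> by simp
qed

text \<open>In \<open>phi \<gamma> = \<Psi>(dilation \<gamma>) + (dilation \<gamma>)^(p-1)/p\<close> every term except \<open>(\<gamma> y)^(p-1)/p\<close>
  carries a factor \<open>(\<gamma> - 1)/p\<close>, which is integral.\<close>
lemma phi_eq_integral_plus_leading:
  assumes \<gamma>: "principal_unit \<gamma>"
  shows "\<exists>G. integral_poly G \<and> av (poly G 0 - 1) < 1 \<and>
    phi \<gamma> = G + smult (\<gamma> ^ (p - 1) / of_nat p) ([:0, 1:] ^ (p - 1))"
proof -
  define \<delta> where "\<delta> = \<gamma> - 1"
  have "1 \<le> p - 1"
    using p_ge_3 by simp
  then obtain R where R: "dilation \<gamma> ^ (p - 1) = smult (\<gamma> ^ (p - 1)) ([:0, 1:] ^ (p - 1)) + smult \<delta> R"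
    "integral_poly R" "poly R 0 = \<delta> ^ (p - 1 - 1)"
    unfolding \<delta>_def by (rule dilation_power_expansion[OF \<gamma>])
  define G where "G = Psi \<circ>\<^sub>p dilation \<gamma> + smult (\<delta> / of_nat p) R"
  have av_\<delta>: "av \<delta> \<le> inverse (real p)"
    using \<gamma> by (simp add: principal_unit_def \<delta>_def)
  then have av_\<delta>_1: "av \<delta> < 1"
    by (rule av_less_1_if_le_inverse_p)
  have "phi \<gamma> = Psi \<circ>\<^sub>p dilation \<gamma> + smult (inverse (of_nat p)) (dilation \<gamma> ^ (p - 1))"
    by (simp add: phi_def Phi_eq_Psi pcompose_add pcompose_smult pcompose_power_left smult_add_right)
  then have "phi \<gamma> = G + smult (\<gamma> ^ (p - 1) / of_nat p) ([:0, 1:] ^ (p - 1))"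
    unfolding R(1) by (simp add: G_def algebra_simps smult_add_right divide_inverse)
  moreover have "integral_poly G"
    unfolding G_def using av_principal_unit[OF \<gamma>] av_\<delta> av_\<delta>_1 R(2)
    by (intro integral_poly_add integral_poly_smult integral_poly_pcompose[OF integral_poly_Psi])
      (simp_all add: av_divide_p_le_1 dilation_def \<delta>_def)
  moreover have "av (poly G 0 - 1) < 1"
  proof -
    have G_0: "poly G 0 - 1 = (poly Psi \<delta> - 1) + \<delta> / of_nat p * \<delta> ^ (p - 1 - 1)"
      by (simp add: G_def poly_pcompose dilation_def \<delta>_def R(3))
    have "av (poly Psi \<delta> - 1) < 1"
      using av_poly_minus_coeff_0_less_1[OF integral_poly_Psi av_\<delta>_1] by (simp add: coeff_Psi_0)
    moreover have "av (\<delta> / of_nat p * \<delta> ^ (p - 1 - 1)) < 1"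
      using av_\<delta> av_\<delta>_1 p_ge_3 av_power[of \<delta> "p - 1 - 1"]
      by (intro av_mult_less_1 av_divide_p_le_1) (auto simp: power_less_one_iff av_nonneg)
    ultimately show ?thesis
      unfolding G_0 by (rule av_add_less)
  qed
  ultimately show ?thesis
    by blast
qed

text \<open>Modulo \<open>W = y^N + p L\<close> one has \<open>y^(p-1) \<equiv> -p y^(p-1-N) L\<close>, which cancels the denominator.\<close>
lemma leading_congruent_integral:
  assumes c: "av c \<le> 1"
    and W: "W = monom 1 N + smult (of_nat p) L" "integral_poly L" "N \<le> p - 1"
    and L0: "N = p - 1 \<Longrightarrow> av (coeff L 0) < 1"
  shows "\<exists>K. integral_poly K \<and> av (poly K 0) < 1 \<and>
    W dvd smult (c / of_nat p) ([:0, 1:] ^ (p - 1)) - K"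
proof -
  define X where "X = ([:0, 1:] :: 'a poly)"
  define K where "K = smult (- c) (X ^ (p - 1 - N) * L)"
  have "p - 1 = (p - 1 - N) + N"
    using W(3) by simp
  then have X_power: "X ^ (p - 1) = X ^ (p - 1 - N) * (W - smult (of_nat p) L)"
    by (metis W(1) X_def X_power_eq_monom add_diff_cancel_right' power_add)
  have "smult (c / of_nat p) (X ^ (p - 1)) - K = W * smult (c / of_nat p) (X ^ (p - 1 - N))"
    unfolding X_power K_def
    by (simp add: algebra_simps smult_diff_right divide_inverse)
  moreover have "integral_poly K"
    unfolding K_def X_def using c W(2)
    by (intro integral_poly_smult integral_poly_mult integral_poly_power) simp_all
  moreover have "av (poly K 0) < 1"
  proof (cases "p - 1 - N = 0")
    case True
    then have "av (coeff L 0) < 1"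
      using W(3) L0 by simp
    then show ?thesis
      using True c by (simp add: K_def X_def poly_0_coeff_0 av_mult_less_1)
  qed (simp add: K_def X_def power_0_left)
  ultimately show ?thesis
    unfolding X_def by (metis dvd_triv_left)
qed

lemma phi_congruent_integral:
  assumes "principal_unit \<gamma>"
    and W: "W = monom 1 N + smult (of_nat p) L" "integral_poly L" "N \<le> p - 1"
    and "N = p - 1 \<Longrightarrow> av (coeff L 0) < 1"
  shows "\<exists>H. integral_poly H \<and> av (poly H 0 - 1) < 1 \<and> W dvd phi \<gamma> - H"
proof -
  obtain G where G: "integral_poly G" "av (poly G 0 - 1) < 1"
    and phi: "phi \<gamma> = G + smult (\<gamma> ^ (p - 1) / of_nat p) ([:0, 1:] ^ (p - 1))"
    using phi_eq_integral_plus_leading[OF assms(1)] by blast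
  have "av (\<gamma> ^ (p - 1)) \<le> 1"
    using av_principal_unit[OF assms(1)] by (simp add: av_power)
  then obtain K where K: "integral_poly K" "av (poly K 0) < 1"
    "W dvd smult (\<gamma> ^ (p - 1) / of_nat p) ([:0, 1:] ^ (p - 1)) - K"
    using leading_congruent_integral[OF _ W assms(5)] by blast
  have "integral_poly (G + K)"
    using G(1) K(1) by (rule integral_poly_add)
  moreover have "av (poly (G + K) 0 - 1) < 1"
    using G(2) K(2) av_add_less[of "poly G 0 - 1" 1 "poly K 0"] by (simp add: algebra_simps)
  moreover have "phi \<gamma> - (G + K) = smult (\<gamma> ^ (p - 1) / of_nat p) ([:0, 1:] ^ (p - 1)) - K"
    by (simp add: phi)
  ultimately show ?thesis
    using K(3) by metis
qed

lemma av_prod_minus_1_less_1: "(\<And>j. j \<in> S \<Longrightarrow> av (x j - 1) < 1) \<Longrightarrow> av (prod x S - 1) < 1"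
proof (induction S rule: infinite_finite_induct)
  case (insert j S)
  have eq: "prod x (insert j S) - 1 = x j * (prod x S - 1) + (x j - 1)"
    using insert(1,2) by (simp add: algebra_simps)
  have "av (x j) = 1"
    using insert(4) av_eq_1_if_near_1 by simp
  then have "av (x j * (prod x S - 1)) < 1"
    using insert by (simp add: av_mult)
  then show ?case
    unfolding eq using insert by (intro av_add_less) auto
qed simp_all

lemma av_coeff_0_small:
  assumes "(\<Prod>j\<in>J. [:- r j, 1:]) = monom 1 (card J) + smult (of_nat p) L"
    and "\<And>j. j \<in> J \<Longrightarrow> av (r j) \<le> inverse (real p)" and "card J \<ge> 2"
  shows "av (coeff L 0) < 1"
proof -
  have "coeff (\<Prod>j\<in>J. [:- r j, 1:]) 0 = (\<Prod>j\<in>J. - r j)"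
    by (simp add: poly_0_coeff_0[symmetric] poly_prod)
  then have "of_nat p * coeff L 0 = (\<Prod>j\<in>J. - r j)"
    using assms(1,3) by (simp add: coeff_monom)
  then have "av (of_nat p * coeff L 0) = av (\<Prod>j\<in>J. - r j)"
    by (rule arg_cong)
  then have "inverse (real p) * av (coeff L 0) = (\<Prod>j\<in>J. av (r j))"
    by (simp only: av_mult av_p av_prod av_minus)
  also have "\<dots> \<le> (\<Prod>j\<in>J. inverse (real p))"
    using assms(2) av_nonneg by (intro prod_mono) auto
  also have "\<dots> = inverse (real p) ^ card J"
    by simp
  also have "\<dots> \<le> inverse (real p) ^ 2"
    using assms(3) inverse_p_less_1 inverse_p_pos by (intro power_decreasing) auto
  finally have "av (coeff L 0) \<le> inverse (real p)"
    using inverse_p_pos by (simp add: power2_eq_square)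
  then show ?thesis
    by (rule av_less_1_if_le_inverse_p)
qed

lemma prod_phi_congruent_integral:
  assumes W: "W = monom 1 N + smult (of_nat p) L" "integral_poly L" "N \<le> p - 1"
    and L_0: "N = p - 1 \<Longrightarrow> av (coeff L 0) < 1"
    and \<gamma>: "\<And>i. i \<in> S \<Longrightarrow> principal_unit (\<gamma> i)"
  shows "\<exists>H. integral_poly H \<and> av (coeff H 0) = 1 \<and> W dvd (\<Prod>i\<in>S. phi (\<gamma> i)) - H"
proof -
  obtain Hf where Hf: "\<And>i. i \<in> S \<Longrightarrow>
      integral_poly (Hf i) \<and> av (poly (Hf i) 0 - 1) < 1 \<and> W dvd phi (\<gamma> i) - Hf i"
    using phi_congruent_integral[OF \<gamma> W L_0] by metis
  define H where "H = (\<Prod>i\<in>S. Hf i)"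
  have "integral_poly H"
    unfolding H_def using Hf by (intro integral_poly_prod) auto
  moreover have "av (coeff H 0) = 1"
    unfolding H_def using Hf
    by (simp add: poly_0_coeff_0[symmetric] poly_prod av_prod_minus_1_less_1 av_eq_1_if_near_1)
  moreover have "W dvd (\<Prod>i\<in>S. phi (\<gamma> i)) - H"
    unfolding H_def using Hf by (intro dvd_prod_diff_prod) auto
  ultimately show ?thesis
    by blast
qed

lemma av_poly_eq_1:
  assumes "integral_poly H" "av (coeff H 0) = 1" "av x < 1"
  shows "av (poly H x) = 1"
proof -
  have "av (poly H x - coeff H 0) < 1"
    using assms(1,3) by (rule av_poly_minus_coeff_0_less_1)
  then show ?thesis
    using assms(2) av_add_eq_dominant[of "poly H x - coeff H 0" "coeff H 0"] by simp
qed

lemma integral_inverse_mod_prod_phi: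
  fixes \<gamma> :: "'b \<Rightarrow> 'a"
  assumes J: "finite J" "J \<noteq> {}" "card J < p" and "S \<subseteq> J"
    and \<gamma>: "\<And>j. j \<in> J \<Longrightarrow> principal_unit (\<gamma> j)"
  defines "r \<equiv> \<lambda>j. inverse (\<gamma> j) - 1"
  shows "\<exists>P. integral_poly P \<and> av (coeff P 0) = 1 \<and> degree P < card J \<and>
           (\<Prod>j\<in>J. [:- r j, 1:]) dvd (\<Prod>i\<in>S. phi (\<gamma> i)) * P - 1"
proof -
  define W where "W = (\<Prod>j\<in>J. [:- r j, 1:])"
  have av_r: "av (r j) \<le> inverse (real p)" if "j \<in> J" for j
    using principal_unit_inverse[OF \<gamma>[OF that]] by (simp add: r_def principal_unit_def)
  obtain L where L: "W = monom 1 (card J) + smult (of_nat p) L" "integral_poly L"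
      "\<forall>k\<ge>card J. coeff L k = 0"
    using prod_linear_small_roots[of J r] J(1) av_r unfolding W_def by blast
  have "card J \<ge> 1"
    using J by (simp add: Suc_leI card_gt_0_iff)
  note W = distinguished_monom_plus_p[OF L this]
  have L_0: "av (coeff L 0) < 1" if "card J = p - 1"
    using av_coeff_0_small[of r J L] L(1) av_r that p_ge_3 unfolding W_def by simp
  have "card J \<le> p - 1"
    using J(3) by simp
  moreover have "\<And>i. i \<in> S \<Longrightarrow> principal_unit (\<gamma> i)"
    using \<gamma> \<open>S \<subseteq> J\<close> by blast
  ultimately obtain H where H: "integral_poly H" "av (coeff H 0) = 1"
    "W dvd (\<Prod>i\<in>S. phi (\<gamma> i)) - H"
    using prod_phi_congruent_integral[OF L(1,2) _ L_0] by blast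
  have "poly H (r j) \<noteq> 0" if "j \<in> J" for j
    using av_poly_eq_1[OF H(1,2) av_less_1_if_le_inverse_p[OF av_r[OF that]]] by force
  then obtain P where P: "degree P < card J" "W dvd H * P - 1"
    using exists_inverse_mod_prod_linear[OF J(1,2)] unfolding W_def by blast
  have "W dvd ((\<Prod>i\<in>S. phi (\<gamma> i)) - H) * P + (H * P - 1)"
    using H(3) P(2) by (intro dvd_add dvd_mult2)
  then have "W dvd (\<Prod>i\<in>S. phi (\<gamma> i)) * P - 1"
    by (simp add: algebra_simps)
  moreover have "integral_poly P \<and> av (coeff P 0) = 1"
    using integral_inverse_mod_distinguished[OF W(1) H(1,2)] P W(2) by simp
  ultimately show ?thesis
    using P(1) unfolding W_def by blast
qed

lemma reduced_solution:
  fixes \<gamma> :: "'b \<Rightarrow> 'a"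
  assumes J: "finite J" "J \<noteq> {}" "card J < p" and S: "S \<subseteq> J"
    and \<gamma>: "\<And>j. j \<in> J \<Longrightarrow> principal_unit (\<gamma> j)"
  defines "F \<equiv> \<Prod>i\<in>S. phi (\<gamma> i)"
  shows "\<exists>P. integral_poly P \<and> av (coeff P 0) = 1 \<and> degree P < card J \<and>
     (\<forall>j\<in>J. dilation (\<gamma> j) dvd F * P - 1) \<and>
     (\<forall>j\<in>S. dilation (\<gamma> j) * phi (\<gamma> j) dvd F * P - phi (\<gamma> j))"
proof -
  obtain P where P: "integral_poly P" "av (coeff P 0) = 1" "degree P < card J"
    "(\<Prod>j\<in>J. [:- (inverse (\<gamma> j) - 1), 1:]) dvd F * P - 1"
    using integral_inverse_mod_prod_phi[of J S \<gamma>] J S \<gamma> unfolding F_def by blast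
  have \<gamma>_0: "\<gamma> j \<noteq> 0" if "j \<in> J" for j
    using principal_unit_neq_0[OF \<gamma>[OF that]] .
  have dvd_1: "dilation (\<gamma> j) dvd F * P - 1" if "j \<in> J" for j
    using dvd_prodI[OF J(1) that, of "\<lambda>j. [:- (inverse (\<gamma> j) - 1), 1:]"] P(4)
    by (auto simp: dvd_dilation_iff[OF \<gamma>_0[OF that]] intro: dvd_trans)
  have "dilation (\<gamma> j) * phi (\<gamma> j) dvd F * P - phi (\<gamma> j)" if "j \<in> S" for j
  proof -
    define F' where "F' = (\<Prod>i\<in>S - {j}. phi (\<gamma> i))"
    have F: "F = phi (\<gamma> j) * F'"
      unfolding F_def F'_def using that J(1) S by (simp add: prod.remove finite_subset)
    have "j \<in> J"
      using that S by blast
    have eq: "F' * P - 1 = (F * P - 1) - (phi (\<gamma> j) - 1) * (F' * P)"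
      unfolding F by (simp add: algebra_simps)
    have "dilation (\<gamma> j) dvd F' * P - 1"
      unfolding eq using dvd_1[OF \<open>j \<in> J\<close>] dilation_dvd_phi_minus_1[OF \<gamma>_0[OF \<open>j \<in> J\<close>]]
      by (rule dvd_diff[OF _ dvd_mult2])
    then have "dilation (\<gamma> j) * phi (\<gamma> j) dvd (F' * P - 1) * phi (\<gamma> j)"
      by (rule mult_dvd_mono) simp
    then show ?thesis
      unfolding F by (simp add: algebra_simps)
  qed
  then show ?thesis
    using P(1-3) dvd_1 by blast
qed

end

section \<open>Twists of \<open>\<omega>\<^sub>n\<close> and \<open>\<xi>\<^sub>n\<close>\<close>

lemma X_plus_1_pcompose: "[:1, 1:] \<circ>\<^sub>p g = 1 + g"
  for g :: "'a::comm_ring_1 poly"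
  by (simp add: pcompose_pCons one_pCons)

lemma degree_omega:
  assumes "p > 0"
  shows "degree (omega p k :: 'a::field_char_0 poly) = p ^ k"
proof -
  have "degree ([:1, 1:] ^ p ^ k + - 1 :: 'a poly) = p ^ k"
    using assms by (subst degree_add_eq_left) (simp_all add: degree_linear_power)
  then show ?thesis
    by (simp add: omega_def)
qed

lemma omega_neq_0:
  assumes "p > 0"
  shows "omega p k \<noteq> (0 :: 'a::field_char_0 poly)"
proof
  assume "omega p k = (0 :: 'a poly)"
  then have "p ^ k = 0"
    using degree_omega[OF assms, of k] by (metis degree_0)
  then show False
    using assms by simp
qed

lemma twist_mult: "twist u j (f * g) = twist u j f * twist u j g"
  by (simp add: twist_def pcompose_mult)

lemma twist_dvd: "f dvd g \<Longrightarrow> twist u j f dvd twist u j g"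
  by (auto simp: twist_mult elim!: dvdE)

lemma degree_twist: "u \<noteq> 0 \<Longrightarrow> degree (twist u j f) = degree f"
  by (simp add: twist_def degree_pcompose)

lemma twist_X_plus_1_power_minus_1:
  "twist u j ([:1, 1:] ^ k - 1) = smult ((u powi (- j)) ^ k) ([:1, 1:] ^ k) - 1"
proof -
  define c where "c = u powi (- j)"
  have "[:1, 1:] \<circ>\<^sub>p [:c - 1, c:] = smult c [:1, 1:]"
    by (simp add: X_plus_1_pcompose one_pCons)
  then show ?thesis
    by (simp only: twist_def c_def[symmetric] pcompose_diff pcompose_power_left pcompose_1 smult_power)
qed

lemma twist_pcompose:
  "twist u j (f \<circ>\<^sub>p ([:1, 1:] ^ m - 1)) = (f \<circ>\<^sub>p dilation ((u powi (- j)) ^ m)) \<circ>\<^sub>p ([:1, 1:] ^ m - 1)"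
proof -
  define Y :: "'a poly" where "Y = [:1, 1:] ^ m - 1"
  have "Y \<circ>\<^sub>p [:u powi (- j) - 1, u powi (- j):] = smult ((u powi (- j)) ^ m) ([:1, 1:] ^ m) - 1"
    using twist_X_plus_1_power_minus_1[of u j m] by (simp add: twist_def Y_def)
  also have "\<dots> = dilation ((u powi (- j)) ^ m) \<circ>\<^sub>p Y"
    by (simp add: Y_def dilation_def pcompose_pCons algebra_simps smult_diff_right one_pCons)
  finally show ?thesis
    by (simp add: twist_def pcompose_assoc[symmetric] flip: Y_def)
qed

context padic_field
begin

lemma comaximal_twist_omega:
  assumes u: "principal_unit u" "u \<noteq> 1" and "i \<noteq> j"
  shows "comaximal (twist u i (omega p n)) (twist u j (omega p n))"
proof -
  have "(u powi (- i)) ^ p ^ n \<noteq> (u powi (- j)) ^ p ^ n"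
    using principal_unit_powi_power_inj[OF u, of "p ^ n" "- i" "- j"] \<open>i \<noteq> j\<close> p_gt_1 by auto
  then show ?thesis
    unfolding omega_def twist_X_plus_1_power_minus_1 by (rule comaximal_smult_minus_1)
qed

lemma omega_eq_mult:
  assumes "n \<ge> 1"
  shows "omega p n = omega p (n - 1) * (Phi \<circ>\<^sub>p omega p (n - 1))"
proof -
  have "p ^ n = p ^ (n - 1) * p"
    using assms by (cases n) auto
  then have "omega p n = ([:1, 1:] ^ p ^ (n - 1)) ^ p - 1"
    by (simp only: omega_def power_mult)
  also have "\<dots> = ([:1, 1:] ^ p - 1) \<circ>\<^sub>p omega p (n - 1)"
    by (simp add: omega_def pcompose_diff pcompose_power_left pcompose_1 X_plus_1_pcompose)
  also have "\<dots> = ([:0, 1:] * Phi) \<circ>\<^sub>p omega p (n - 1)"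
    by (simp only: X_mult_Phi)
  finally show ?thesis
    by (simp only: pcompose_mult pcompose_idL)
qed

lemma xi_eq_Phi_pcompose:
  assumes "n \<ge> 1"
  shows "xi p n = Phi \<circ>\<^sub>p omega p (n - 1)"
proof -
  have "omega p (n - 1) \<noteq> (0 :: 'a poly)"
    using p_gt_1 by (intro omega_neq_0) simp
  then show ?thesis
    unfolding xi_def omega_eq_mult[OF assms] by (rule nonzero_mult_div_cancel_left)
qed

lemma omega_pred_dvd_omega:
  assumes "n \<ge> 1"
  shows "omega p (n - 1) dvd (omega p n :: 'a poly)"
  using omega_eq_mult[OF assms] by (rule dvdI)

context
  fixes u :: 'a and j :: int and n :: nat
  assumes n: "n \<ge> 1"
begin

lemma twist_omega_pred:
  "twist u j (omega p (n - 1)) = dilation ((u powi (- j)) ^ p ^ (n - 1)) \<circ>\<^sub>p omega p (n - 1)"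
  using twist_pcompose[of u j "[:0, 1:]" "p ^ (n - 1)"] by (simp add: omega_def)

lemma twist_xi:
  "smult (inverse (of_nat p)) (twist u j (xi p n)) = phi ((u powi (- j)) ^ p ^ (n - 1)) \<circ>\<^sub>p omega p (n - 1)"
  using twist_pcompose[of u j Phi "p ^ (n - 1)"] n
  by (simp add: xi_eq_Phi_pcompose phi_def pcompose_smult omega_def twist_def)

lemma twist_omega:
  defines "\<gamma> \<equiv> (u powi (- j)) ^ p ^ (n - 1)"
  shows "twist u j (omega p n) = smult (of_nat p) ((dilation \<gamma> * phi \<gamma>) \<circ>\<^sub>p omega p (n - 1))"
proof -
  have "twist u j (Phi \<circ>\<^sub>p omega p (n - 1)) = smult (of_nat p) (phi \<gamma> \<circ>\<^sub>p omega p (n - 1))"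
    using arg_cong[OF twist_xi, of "smult (of_nat p)"] n by (simp add: \<gamma>_def xi_eq_Phi_pcompose)
  then show ?thesis
    unfolding omega_eq_mult[OF n] twist_mult twist_omega_pred by (simp add: \<gamma>_def pcompose_mult)
qed

end

lemma ell_eq_pcompose:
  "n \<ge> 1 \<Longrightarrow> ell p u n S = (\<Prod>j\<in>S. phi ((u powi (- j)) ^ p ^ (n - 1))) \<circ>\<^sub>p omega p (n - 1)"
  by (simp add: ell_def twist_xi pcompose_prod)

end

section \<open>The interpolating polynomial\<close>

lemma pcompose_dvd: "f dvd g \<Longrightarrow> f \<circ>\<^sub>p Y dvd g \<circ>\<^sub>p (Y :: 'a::comm_ring_1 poly)"
  by (elim dvdE) (simp add: pcompose_mult)

context padic_field
begin

lemma sum_degree_twist_omega: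
  assumes "u \<noteq> 0" "finite J" "S \<subseteq> J" "n \<ge> 1"
  shows "(\<Sum>j\<in>J. degree (twist u j (omega p (if j \<in> S then n else n - 1))))
    = ((p - 1) * card S + card J) * p ^ (n - 1)"
proof -
  have "(\<Sum>j\<in>J. degree (twist u j (omega p (if j \<in> S then n else n - 1))))
      = card S * p ^ n + card (J - S) * p ^ (n - 1)"
    using assms p_gt_1
    by (simp add: degree_twist degree_omega if_distrib sum.If_cases Int_absorb1 Diff_eq[symmetric]
        Int_commute)
  moreover have "p ^ n = p ^ (n - 1) * p" "card J = card S + card (J - S)"
    using assms by (cases n, simp_all add: card_Diff_subset card_mono finite_subset)
  moreover obtain p' where "p = Suc p'"
    using p_gt_1 by (cases p) auto
  ultimately show ?thesis
    by (simp add: algebra_simps)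
qed

text \<open>The moduli in the definition of \<open>\<xi>\<^sup>~\<close> are pairwise comaximal and their degrees add up to the
  degree bound.\<close>
lemma eq_if_xi_tilde_congruent:
  assumes u: "principal_unit u" "u \<noteq> 1" and J: "finite J" "S \<subseteq> J" and n: "n \<ge> 1"
    and deg: "degree q1 < ((p - 1) * card S + card J) * p ^ (n - 1)"
      "degree q2 < ((p - 1) * card S + card J) * p ^ (n - 1)"
    and cong_S: "\<And>j. j \<in> S \<Longrightarrow> twist u j (omega p n) dvd q1 - q2"
    and cong_J: "\<And>j. j \<in> J - S \<Longrightarrow> twist u j (omega p (n - 1)) dvd q1 - q2"
  shows "q1 = q2"
proof -
  define M where "M j = twist u j (omega p (if j \<in> S then n else n - 1))" for j
  have "u \<noteq> 0"
    using principal_unit_neq_0[OF u(1)] .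
  show ?thesis
  proof (rule eq_if_congruent_pairwise_comaximal[OF J(1)])
    show "M j dvd q1 - q2" if "j \<in> J" for j
      using cong_S cong_J that by (simp add: M_def)
    show "M j \<noteq> 0" for j
    proof -
      have "degree (M j) > 0"
        using \<open>u \<noteq> 0\<close> p_gt_1 by (simp add: M_def degree_twist degree_omega)
      then show ?thesis
        by auto
    qed
    show "comaximal (M i) (M j)" if "i \<in> J" "j \<in> J" "i \<noteq> j" for i j
    proof -
      have M_dvd: "M k dvd twist u k (omega p n)" for k
        using omega_pred_dvd_omega[OF n] by (simp add: M_def twist_dvd)
      show ?thesis
        using M_dvd M_dvd comaximal_twist_omega[OF u \<open>i \<noteq> j\<close>] by (rule comaximal_dvd)
    qed
    show "degree q1 < (\<Sum>j\<in>J. degree (M j))" "degree q2 < (\<Sum>j\<in>J. degree (M j))"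
      using deg sum_degree_twist_omega[OF \<open>u \<noteq> 0\<close> J n] by (simp_all add: M_def)
  qed
qed

lemma xi_tilde_eqI:
  assumes u: "principal_unit u" "u \<noteq> 1" and J: "finite J" "S \<subseteq> J" and n: "n \<ge> 1"
    and deg: "degree q < ((p - 1) * card S + card J) * p ^ (n - 1)"
    and cong_S: "\<And>j. j \<in> S \<Longrightarrow>
      twist u j (omega p n) dvd q - smult (inverse (of_nat p)) (twist u j (xi p n))"
    and cong_J: "\<And>j. j \<in> J - S \<Longrightarrow> twist u j (omega p (n - 1)) dvd q - 1"
  shows "xi_tilde p u n S J = q"
  unfolding xi_tilde_def
proof (rule the_equality)
  show "(q = 0 \<or> degree q < ((p - 1) * card S + card J) * p ^ (n - 1)) \<and>
    (\<forall>j\<in>S. q mod twist u j (omega p n) =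
       smult (inverse (of_nat p)) (twist u j (xi p n)) mod twist u j (omega p n)) \<and>
    (\<forall>j\<in>J - S. q mod twist u j (omega p (n - 1)) = 1 mod twist u j (omega p (n - 1)))"
    using deg cong_S cong_J by (simp add: mod_eq_dvd_iff)
  fix q'
  assume "(q' = 0 \<or> degree q' < ((p - 1) * card S + card J) * p ^ (n - 1)) \<and>
    (\<forall>j\<in>S. q' mod twist u j (omega p n) =
       smult (inverse (of_nat p)) (twist u j (xi p n)) mod twist u j (omega p n)) \<and>
    (\<forall>j\<in>J - S. q' mod twist u j (omega p (n - 1)) = 1 mod twist u j (omega p (n - 1)))"
  then have deg': "degree q' < ((p - 1) * card S + card J) * p ^ (n - 1)"
    and cong_S': "\<And>j. j \<in> S \<Longrightarrow> twist u j (omega p n) dvd q' - smult (inverse (of_nat p)) (twist u j (xi p n))"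
    and cong_J': "\<And>j. j \<in> J - S \<Longrightarrow> twist u j (omega p (n - 1)) dvd q' - 1"
    using deg by (auto simp only: mod_eq_dvd_iff degree_0)
  show "q' = q"
    using u J n deg' deg
  proof (rule eq_if_xi_tilde_congruent)
    show "twist u j (omega p n) dvd q' - q" if "j \<in> S" for j
      using dvd_diff[OF cong_S'[OF that] cong_S[OF that]] by simp
    show "twist u j (omega p (n - 1)) dvd q' - q" if "j \<in> J - S" for j
      using dvd_diff[OF cong_J'[OF that] cong_J[OF that]] by simp
  qed
qed

lemma Zp_fps_inverse:
  assumes f: "Zp_fps av f" "av (f $ 0) = 1"
  shows "Zp_fps av (inverse f)"
  unfolding Zp_fps_def
proof
  have fg: "f * inverse f = 1"
    using f(2) by (intro inverse_mult_eq_1') force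
  fix n
  show "av (inverse f $ n) \<le> 1"
  proof (induction n rule: less_induct)
    case (less n)
    show ?case
    proof (cases "n = 0")
      case True
      then show ?thesis
        using f(2) by (simp add: av_inverse)
    next
      case False
      have "(\<Sum>i=0..n. f $ i * inverse f $ (n - i)) = 0"
        using arg_cong[OF fg, of "\<lambda>h. h $ n"] False by (simp add: fps_mult_nth)
      moreover have "(\<Sum>i=0..n. f $ i * inverse f $ (n - i))
          = f $ 0 * inverse f $ n + (\<Sum>i\<in>{0..n} - {0}. f $ i * inverse f $ (n - i))"
        by (subst sum.remove[of _ 0]) auto
      moreover have "av (\<Sum>i\<in>{0..n} - {0}. f $ i * inverse f $ (n - i)) \<le> 1"
        using less f(1) unfolding Zp_fps_def
        by (intro av_sum_le) (auto simp: av_mult intro!: mult_le_one av_nonneg)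
      ultimately have "f $ 0 * inverse f $ n = - (\<Sum>i\<in>{0..n} - {0}. f $ i * inverse f $ (n - i))"
        and "av (\<Sum>i\<in>{0..n} - {0}. f $ i * inverse f $ (n - i)) \<le> 1"
        by (simp_all add: eq_neg_iff_add_eq_0)
      then have "av (f $ 0 * inverse f $ n) \<le> 1"
        by simp
      then show ?thesis
        using f(2) by (simp add: av_mult)
    qed
  qed
qed

lemma unit_fps_of_integral_poly:
  assumes "integral_poly P" "av (coeff P 0) = 1" "integral_poly Y" "coeff Y 0 = 0"
  defines "U \<equiv> fps_of_poly (P \<circ>\<^sub>p Y)"
  shows "Zp_fps av U" "Zp_fps av (inverse U)" "U * inverse U = 1"
proof -
  have "U $ 0 = coeff P 0"
    using assms(4) by (simp add: U_def poly_0_coeff_0[symmetric] poly_pcompose)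
  then have "av (U $ 0) = 1"
    using assms(2) by simp
  moreover show "Zp_fps av U"
    using integral_poly_pcompose[OF assms(1,3)] by (simp add: U_def Zp_fps_def integral_polyD)
  ultimately show "Zp_fps av (inverse U)" "U * inverse U = 1"
    by (auto intro: Zp_fps_inverse inverse_mult_eq_1')
qed

lemma degree_prod_phi_le:
  assumes "finite S"
  shows "degree (\<Prod>i\<in>S. phi (\<gamma> i)) \<le> (p - 1) * card S"
proof -
  have "degree (\<Prod>i\<in>S. phi (\<gamma> i)) \<le> (\<Sum>i\<in>S. degree (phi (\<gamma> i)))"
    using degree_prod_sum_le[OF assms] by (simp add: o_def)
  also have "\<dots> \<le> card S * (p - 1)"
    using sum_bounded_above[of S "\<lambda>i. degree (phi (\<gamma> i))" "p - 1"] degree_phi_le by simp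
  finally show ?thesis
    by (simp add: mult.commute)
qed

lemma xi_tilde_eq_ell_mult:
  assumes u: "principal_unit u" "u \<noteq> 1"
    and J: "finite J" "J \<noteq> {}" "card J < p" "S \<subseteq> J" and n: "n \<ge> 1"
  shows "\<exists>P. integral_poly P \<and> av (coeff P 0) = 1 \<and>
    xi_tilde p u n S J = ell p u n S * (P \<circ>\<^sub>p omega p (n - 1))"
proof -
  define Y where "Y = (omega p (n - 1) :: 'a poly)"
  define \<gamma> where "\<gamma> j = (u powi (- j)) ^ p ^ (n - 1)" for j
  define F where "F = (\<Prod>i\<in>S. phi (\<gamma> i))"
  have "principal_unit (\<gamma> j)" for j
    using u(1) by (simp add: \<gamma>_def principal_unit_power principal_unit_powi)
  then obtain P where P: "integral_poly P" "av (coeff P 0) = 1" "degree P < card J"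
    "\<And>j. j \<in> J \<Longrightarrow> dilation (\<gamma> j) dvd F * P - 1"
    "\<And>j. j \<in> S \<Longrightarrow> dilation (\<gamma> j) * phi (\<gamma> j) dvd F * P - phi (\<gamma> j)"
    using reduced_solution[OF J] unfolding F_def by blast
  have "xi_tilde p u n S J = (F * P) \<circ>\<^sub>p Y"
  proof (rule xi_tilde_eqI[OF u J(1,4) n])
    have "degree F \<le> (p - 1) * card S"
      unfolding F_def using finite_subset[OF J(4,1)] by (rule degree_prod_phi_le)
    then have "degree (F * P) < (p - 1) * card S + card J"
      using P(3) degree_mult_le[of F P] by linarith
    then show "degree ((F * P) \<circ>\<^sub>p Y) < ((p - 1) * card S + card J) * p ^ (n - 1)"
      using p_gt_1 by (simp add: Y_def degree_pcompose degree_omega)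
  next
    fix j
    assume "j \<in> S"
    then have "(dilation (\<gamma> j) * phi (\<gamma> j)) \<circ>\<^sub>p Y dvd (F * P - phi (\<gamma> j)) \<circ>\<^sub>p Y"
      by (rule pcompose_dvd[OF P(5)])
    then show "twist u j (omega p n) dvd (F * P) \<circ>\<^sub>p Y - smult (inverse (of_nat p)) (twist u j (xi p n))"
      unfolding twist_omega[OF n] twist_xi[OF n]
      using p_gt_1 by (intro smult_dvd) (simp_all add: Y_def \<gamma>_def pcompose_diff)
  next
    fix j
    assume "j \<in> J - S"
    then have "dilation (\<gamma> j) \<circ>\<^sub>p Y dvd (F * P - 1) \<circ>\<^sub>p Y"
      using P(4) by (intro pcompose_dvd) auto
    then show "twist u j (omega p (n - 1)) dvd (F * P) \<circ>\<^sub>p Y - 1"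
      unfolding twist_omega_pred[OF n] by (simp add: Y_def \<gamma>_def pcompose_diff pcompose_1)
  qed
  also have "\<dots> = ell p u n S * (P \<circ>\<^sub>p Y)"
    using n by (simp add: ell_eq_pcompose F_def \<gamma>_def Y_def pcompose_mult)
  finally show ?thesis
    using P(1,2) unfolding Y_def by blast
qed

end

theorem mainTheorem3:
  fixes p :: nat and av :: "'a::field_char_0 \<Rightarrow> real" and u :: 'a
    and a b c d :: int and n :: nat
  assumes "prime p" and "odd p"
    and "is_Qp p av"
    and "av (u - 1) \<le> inverse (real p)" and "u \<noteq> 1"
    and "a \<le> b" and "card {a..b} < p"
    and "{c..d} \<subseteq> {a..b}"
    and "n \<ge> 1"
  shows "\<exists>U V. Zp_fps av U \<and> Zp_fps av V \<and> U * V = 1 \<and>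
           fps_of_poly (xi_tilde p u n {c..d} {a..b}) = fps_of_poly (ell p u n {c..d}) * U"
proof -
  interpret padic_field p av
    using assms(1-3) by unfold_locales
  have u: "principal_unit u"
    using assms(4) by (simp add: principal_unit_def)
  have J: "finite {a..b}" "{a..b} \<noteq> {}"
    using assms(6) by auto
  obtain P where P: "integral_poly P" "av (coeff P 0) = 1"
    and xi_tilde: "xi_tilde p u n {c..d} {a..b} = ell p u n {c..d} * (P \<circ>\<^sub>p omega p (n - 1))"
    using xi_tilde_eq_ell_mult[OF u assms(5) J assms(7-9)] by blast
  have Y: "integral_poly (omega p (n - 1))" "coeff (omega p (n - 1) :: 'a poly) 0 = 0"
    by (simp_all add: omega_def integral_poly_diff integral_poly_power poly_0_coeff_0[symmetric])
  define U where "U = fps_of_poly (P \<circ>\<^sub>p omega p (n - 1))"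
  have "fps_of_poly (xi_tilde p u n {c..d} {a..b}) = fps_of_poly (ell p u n {c..d}) * U"
    by (simp add: xi_tilde U_def fps_of_poly_mult)
  then show ?thesis
    using unit_fps_of_integral_poly[OF P Y] unfolding U_def[symmetric] by blast
qed

end
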